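(* Let $N$ be a positive integer. If there is at least one pair of palindromic numbers $A,B$ with $N=A/B$, then there are infinitely many such pairs.
   Context: A positive integer $n$ is palindromic if its binary representation (most significant digit first, no leading zeros) reads the same forwards and backwards. *)

theory Defs
  imports Main
begin

fun bin_digits :: "nat \<Rightarrow> nat list" where
  "bin_digits n = (if n = 0 then [] else n mod 2 # bin_digits (n div 2))"

declare bin_digits.simps[simp del]

definition palindromic :: "nat \<Rightarrow> bool" where
  "palindromic n \<longleftrightarrow> n > 0 \<and> rev (bin_digits n) = bin_digits n"

end

theory Submission
  imports Defs
begin

text \<open>If \<open>A = N * B\<close> with \<open>A\<close>, \<open>B\<close> palindromic and both binary expansions of length at most \<open>s\<close>,
  then multiplying by \<open>2 ^ s + 1\<close> writes each expansion twice, separated by a block of zeros.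
  The results are again palindromic with the same quotient \<open>N\<close>, and distinct \<open>s\<close> give distinct pairs.\<close>

lemma bin_digits_0 [simp]: "bin_digits 0 = []"
  by (simp add: bin_digits.simps)

lemma bin_digits_pos: "n > 0 \<Longrightarrow> bin_digits n = n mod 2 # bin_digits (n div 2)"
  by (simp add: bin_digits.simps)

lemma less_two_power_length_bin_digits: "n < 2 ^ length (bin_digits n)"
proof (induction n rule: bin_digits.induct)
  case (1 n)
  then show ?case
    by (cases "n = 0") (auto simp: bin_digits_pos)
qed

lemma length_bin_digits_mono:
  "m \<le> n \<Longrightarrow> length (bin_digits m) \<le> length (bin_digits n)"
proof (induction n arbitrary: m rule: bin_digits.induct)
  case (1 n)
  show ?case
  proof (cases "m = 0")
    case False
    with "1.prems" have "length (bin_digits (m div 2)) \<le> length (bin_digits (n div 2))"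
      by (intro "1.IH") (auto intro: div_le_mono)
    with False "1.prems" show ?thesis
      by (simp add: bin_digits_pos)
  qed simp
qed

lemma bin_digits_add_two_power_mult:
  assumes "x < 2 ^ s" and "y > 0"
  shows "bin_digits (x + 2 ^ s * y) =
    bin_digits x @ replicate (s - length (bin_digits x)) 0 @ bin_digits y"
  using assms
proof (induction s arbitrary: x)
  case 0
  then show ?case by simp
next
  case (Suc s)
  have split: "x + 2 ^ Suc s * y = x + (2 ^ s * y) * 2"
    by simp
  have "bin_digits (x + 2 ^ Suc s * y) = x mod 2 # bin_digits (x div 2 + 2 ^ s * y)"
    using Suc.prems unfolding split by (subst bin_digits_pos) (auto simp: add.commute)
  also have "\<dots> = x mod 2 #
      (bin_digits (x div 2) @ replicate (s - length (bin_digits (x div 2))) 0 @ bin_digits y)"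
    using Suc.prems by (simp add: Suc.IH)
  also have "\<dots> = bin_digits x @ replicate (Suc s - length (bin_digits x)) 0 @ bin_digits y"
    by (cases "x = 0") (simp_all add: bin_digits_pos)
  finally show ?case .
qed

lemma palindromic_mult_two_power_plus_one:
  assumes "palindromic x" and "length (bin_digits x) \<le> s"
  shows "palindromic (x * (2 ^ s + 1))"
proof -
  have "x > 0" and rev_x: "rev (bin_digits x) = bin_digits x"
    using assms(1) by (auto simp: palindromic_def)
  have "x < 2 ^ s"
    using less_two_power_length_bin_digits[of x] assms(2)
    by (meson less_le_trans one_le_numeral power_increasing)
  then have "bin_digits (x * (2 ^ s + 1)) =
      bin_digits x @ replicate (s - length (bin_digits x)) 0 @ bin_digits x"
    using bin_digits_add_two_power_mult[of x s x] \<open>x > 0\<close> by (simp add: algebra_simps)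
  with \<open>x > 0\<close> rev_x show ?thesis
    by (simp add: palindromic_def)
qed

theorem theorem11:
  fixes N :: nat
  assumes "N > 0"
    and "\<exists>A B. palindromic A \<and> palindromic B \<and> A = N * B"
  shows "infinite {(A, B). palindromic A \<and> palindromic B \<and> A = N * B}"
proof -
  obtain A B where A: "palindromic A" and B: "palindromic B" and "A = N * B"
    using assms(2) by blast
  define L where "L = length (bin_digits A)"
  have "length (bin_digits B) \<le> L"
    unfolding L_def using \<open>A = N * B\<close> \<open>N > 0\<close> by (intro length_bin_digits_mono) simp
  define f where "f s = (A * (2 ^ s + 1), B * (2 ^ s + 1))" for s :: nat
  have "f ` {L..} \<subseteq> {(A, B). palindromic A \<and> palindromic B \<and> A = N * B}"
    using palindromic_mult_two_power_plus_one[OF A] palindromic_mult_two_power_plus_one[OF B]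
      \<open>length (bin_digits B) \<le> L\<close> \<open>A = N * B\<close>
    by (auto simp: f_def L_def algebra_simps)
  moreover have "inj f"
    using B by (auto intro!: injI simp: f_def palindromic_def)
  then have "infinite (f ` {L..})"
    by (simp add: finite_image_iff inj_on_subset infinite_Ici)
  ultimately show ?thesis
    using infinite_super by blast
qed

end
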